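(* Let $k$ be a positive integer. For any odd prime $p>k$, the rational number $P_k(1,4,0)$ satisfies $P_k(1,4,0)\not\equiv0\pmod p$ (i.e. it is a $p$-adic unit).
   Context: Define $\widetilde c_n\in\mathbb Q[\beta]$ by $\widetilde c_0=2$, $\widetilde c_1=1$, $(n+1)\widetilde c_{n+1}=\widetilde c_n+\frac\beta4(n-1)\widetilde c_{n-1}$ for $n\ge1$, and $\widetilde c_n=0$ for $n<0$. Then $P_k(1,\beta,0)$ is the $k\times k$ determinant with $(j,l)$ entry $\widetilde c_{k-2(j-1)+(l-1)}$, $1\le j,l\le k$. (These $\widetilde c_n$ are the specializations $h=1,\gamma=0$ of polynomials $c_n(h,\beta,\gamma)$ with $c_0=2$ and $\log(1+\sum_{n\ge1}c_nt^n)=\sum_{m\ge1}(-1)^{m-1}(m-1)!\mathrm{ch}_mt^m$, $\mathrm{ch}_1=h$, $\mathrm{ch}_{2n}=0$, $\mathrm{ch}_{2n-1}=\frac1{(2n-1)!}(\frac{\beta h}4-\frac{n-1}2\gamma)(\frac\beta4)^{n-2}$ for $n\ge2$, and $P_k(h,\beta,\gamma)=\det(c_{k-2(j-1)+(l-1)})$.) *)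

theory Defs
  imports "Jordan_Normal_Form.Determinant" "HOL-Computational_Algebra.Primes"
begin

fun ctil :: "rat \<Rightarrow> nat \<Rightarrow> rat" where
  "ctil \<beta> 0 = 2"
| "ctil \<beta> (Suc 0) = 1"
| "ctil \<beta> (Suc (Suc n)) =
     (ctil \<beta> (Suc n) + \<beta> / 4 * of_nat n * ctil \<beta> n) / of_nat (n + 2)"

definition ctilZ :: "rat \<Rightarrow> int \<Rightarrow> rat" where
  "ctilZ \<beta> i = (if i < 0 then 0 else ctil \<beta> (nat i))"

text \<open>P_k(1,beta,0): k x k determinant with (j,l) entry c_(k-2(j-1)+(l-1)), 1 <= j,l <= k;
  here with 0-based indices i = j-1, m = l-1.\<close>
definition Pk :: "nat \<Rightarrow> rat \<Rightarrow> rat" where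
  "Pk k \<beta> = det (mat k k (\<lambda>(i, m). ctilZ \<beta> (int k - 2 * int i + int m)))"

definition padic_unit :: "nat \<Rightarrow> rat \<Rightarrow> bool" where
  "padic_unit p r = (\<not> int p dvd fst (quotient_of r) \<and> \<not> int p dvd snd (quotient_of r))"

end

(*
  At beta = 4 the generating series F = 1 + \<Sum> c_n t^n satisfies (1 - t^2) F' = F, hence
  (1 - t) F^2 = 1 + t. Its [k/k] Pade approximants are q_k(-t)/q_k(t) with q_0 = 1,
  q_1 = 2 - t, q_{k+2} = 2 q_{k+1} - t^2 q_k; the error is r^k (F - 1) with r = 1 - (1 - t) F
  of order 2. So the odd coefficients of q_k (F + 1) vanish up to degree 2k, which says that
  the matrix of P_{n+1} is the matrix of P_n, bordered by a last row (0, ..., 0, c_0 = 2),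
  times the companion matrix of q_{n+1}. As q_k has constant term 2^k and leading coefficient
  +-1, this gives P_k(1,4,0) = +-2^(-k(k-1)/2), a unit at every odd prime.
*)

theory Submission
  imports Defs "HOL-Computational_Algebra.Formal_Power_Series"
begin

no_notation vec_index (infixl "$" 100)
notation fps_nth (infixl "$" 75)

(* Constant term 1, not c_0 = 2, as in the generating series 1 + \<Sum>_{n\<ge>1} c_n t^n. *)
definition ctil_fps :: "rat fps" where
  "ctil_fps = Abs_fps (\<lambda>n. if n = 0 then 1 else ctil 4 n)"

lemma ctil_fps_nth_0 [simp]: "ctil_fps $ 0 = 1"
  and ctil_fps_nth_1 [simp]: "ctil_fps $ Suc 0 = 1"
  by (simp_all add: ctil_fps_def)

lemma ctil_fps_plus_1_nth: "(ctil_fps + 1) $ n = ctil 4 n"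
  by (cases n) (simp_all add: ctil_fps_def)

lemma ctil_fps_rec:
  "of_nat (n + 2) * ctil_fps $ (n + 2) = ctil_fps $ (n + 1) + of_nat n * ctil_fps $ n"
proof -
  have "of_nat n * ctil_fps $ n = of_nat n * ctil 4 n"
    by (cases n) (simp_all add: ctil_fps_def)
  moreover have "(of_nat (n + 2) :: rat) \<noteq> 0" by simp
  ultimately show ?thesis by (simp add: ctil_fps_def)
qed

lemma ctil_fps_ode: "(1 - fps_X^2) * fps_deriv ctil_fps = ctil_fps"
proof (rule fps_ext)
  fix m
  show "((1 - fps_X^2) * fps_deriv ctil_fps) $ m = ctil_fps $ m"
  proof (cases m)
    case 0
    then show ?thesis by (simp add: fps_X_power_mult_nth)
  next
    case (Suc j)
    have "((1 - fps_X^2) * fps_deriv ctil_fps) $ Suc j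
        = of_nat (j + 2) * ctil_fps $ (j + 2) - of_nat j * ctil_fps $ j"
      by (cases j) (simp_all add: ring_distribs fps_X_power_mult_nth fps_X_power_mult_right_nth algebra_simps)
    then show ?thesis using Suc ctil_fps_rec[of j] by simp
  qed
qed

lemma fps_eq_0_if_1_plus_X_ode:
  fixes u :: "'a::field_char_0 fps"
  assumes ode: "(1 + fps_X) * fps_deriv u = u" and "u $ 0 = 0"
  shows "u = 0"
proof -
  have rec: "of_nat (Suc n) * u $ Suc n + of_nat n * u $ n = u $ n" for n
  proof -
    have "((1 + fps_X) * fps_deriv u) $ n = u $ n" using ode by simp
    then show ?thesis by (cases n) (simp_all add: algebra_simps)
  qed
  have "u $ n = 0" for n
  proof (induction n)
    case (Suc n)
    then show ?case using rec[of n] by (simp del: of_nat_Suc)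
  qed (fact \<open>u $ 0 = 0\<close>)
  then show ?thesis by (simp add: fps_ext)
qed

lemma ctil_fps_square: "(1 - fps_X) * ctil_fps^2 = 1 + fps_X"
proof -
  define u where "u = (1 - fps_X) * ctil_fps^2 - (1 + fps_X)"
  have "(1 + fps_X) * fps_deriv u
      = 2 * ctil_fps * ((1 - fps_X^2) * fps_deriv ctil_fps) - (1 + fps_X) * (ctil_fps^2 + 1)"
    unfolding u_def by (simp add: algebra_simps power2_eq_square)
  also have "\<dots> = u"
    unfolding ctil_fps_ode u_def by (simp add: algebra_simps power2_eq_square)
  finally have "(1 + fps_X) * fps_deriv u = u" .
  moreover have "u $ 0 = 0" by (simp add: u_def power2_eq_square)
  ultimately have "u = 0" by (rule fps_eq_0_if_1_plus_X_ode)
  then show ?thesis by (simp add: u_def)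
qed

(* pade 1 k / pade (-1) k is the [k/k] Pade approximant of ctil_fps (pade_approximation). *)
fun pade :: "rat \<Rightarrow> nat \<Rightarrow> rat fps" where
  "pade \<sigma> 0 = 1"
| "pade \<sigma> (Suc 0) = 2 + fps_const \<sigma> * fps_X"
| "pade \<sigma> (Suc (Suc k)) = 2 * pade \<sigma> (Suc k) - fps_X^2 * pade \<sigma> k"

declare pade.simps(3) [simp del]

lemma pade_nth_Suc_Suc:
  "pade \<sigma> (Suc (Suc k)) $ n = 2 * pade \<sigma> (Suc k) $ n - (if n < 2 then 0 else pade \<sigma> k $ (n - 2))"
  by (simp add: pade.simps(3) fps_X_power_mult_nth numeral_fps_const)

lemma pade_nth_0 [simp]: "pade \<sigma> k $ 0 = 2 ^ k"
  by (induction \<sigma> k rule: pade.induct) (simp_all add: pade_nth_Suc_Suc fps_numeral_nth)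

lemma pade_nth_above_degree: "k < n \<Longrightarrow> pade \<sigma> k $ n = 0"
  by (induction \<sigma> k arbitrary: n rule: pade.induct) (auto simp: pade_nth_Suc_Suc fps_numeral_nth)

lemma pade_nth_degree: "pade (-1) k $ k = (-1) ^ ((k + 1) div 2)"
proof (induction "-1::rat" k rule: pade.induct)
  case (3 k)
  then show ?case by (simp add: pade_nth_Suc_Suc pade_nth_above_degree fps_numeral_nth)
qed (simp_all add: fps_numeral_nth)

lemma pade_reflect: "pade (- \<sigma>) k $ n = (-1) ^ n * pade \<sigma> k $ n"
proof (induction \<sigma> k arbitrary: n rule: pade.induct)
  case (2 \<sigma>)
  then show ?case by (cases n) (auto simp: fps_numeral_nth numeral_2_eq_2 elim: less_SucE)
next
  case (3 \<sigma> k)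
  have "(-1::rat) ^ n = (-1) ^ (n - 2)" if "\<not> n < 2"
  proof -
    have "n = (n - 2) + 2" using that by simp
    then show ?thesis by (metis power_add power_minus1_even mult_1_right)
  qed
  then show ?case using 3 by (auto simp: pade_nth_Suc_Suc algebra_simps)
qed simp

(* This is 1 - sqrt (1 - X^2), since ((1 - X) * ctil_fps)^2 = 1 - X^2. *)
definition pade_error_factor :: "rat fps" where
  "pade_error_factor = 1 - (1 - fps_X) * ctil_fps"

lemma pade_error_factor_square:
  "pade_error_factor * pade_error_factor = 2 * pade_error_factor - fps_X^2"
proof -
  have "((1 - fps_X) * ctil_fps) * ((1 - fps_X) * ctil_fps) = (1 - fps_X) * ((1 - fps_X) * ctil_fps^2)"
    by (simp add: algebra_simps power2_eq_square)
  also have "\<dots> = (1 - fps_X) * (1 + fps_X)"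
    by (simp only: ctil_fps_square)
  finally show ?thesis
    by (simp add: pade_error_factor_def algebra_simps power2_eq_square)
qed

lemma pade_error:
  "pade (-1) k * ctil_fps - pade 1 k = pade_error_factor ^ k * (ctil_fps - 1)"
proof (induction "-1::rat" k rule: pade.induct)
  case 2
  show ?case
    using ctil_fps_square
    by (simp add: pade_error_factor_def algebra_simps power2_eq_square fps_const_neg [symmetric]
        del: fps_const_neg)
next
  case (3 k)
  have "pade (-1) (Suc (Suc k)) * ctil_fps - pade 1 (Suc (Suc k))
      = 2 * (pade (-1) (Suc k) * ctil_fps - pade 1 (Suc k))
        - fps_X^2 * (pade (-1) k * ctil_fps - pade 1 k)"
    by (simp add: pade.simps(3) algebra_simps)
  also have "\<dots> = pade_error_factor ^ k * (ctil_fps - 1) * (2 * pade_error_factor - fps_X^2)"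
    unfolding 3 by (simp add: algebra_simps)
  also have "\<dots> = pade_error_factor ^ k * (ctil_fps - 1) * (pade_error_factor * pade_error_factor)"
    by (simp only: pade_error_factor_square)
  also have "\<dots> = pade_error_factor ^ Suc (Suc k) * (ctil_fps - 1)"
    by (simp add: algebra_simps)
  finally show ?case .
qed simp

lemma pade_approximation:
  assumes "n \<le> 2 * k"
  shows "(pade (-1) k * ctil_fps) $ n = pade 1 k $ n"
proof -
  define r where "r = fps_shift 2 pade_error_factor"
  define g where "g = fps_shift 1 (ctil_fps - 1)"
  have "pade_error_factor $ i = 0" if "i < 2" for i
    using that by (auto simp: pade_error_factor_def algebra_simps less_2_cases_iff)
  then have r: "pade_error_factor = fps_X^2 * r"
    unfolding r_def by (intro fps_conv_fps_X_power_mult_fps_shift) (auto intro!: subdegree_geI)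
  have g: "ctil_fps - 1 = fps_X * g"
    by (intro fps_ext) (simp add: g_def fps_X_mult_nth)
  have "pade (-1) k * ctil_fps - pade 1 k = fps_X ^ (2 * k + 1) * (r ^ k * g)"
    unfolding pade_error r g power_add power_mult by (simp add: power_mult_distrib mult_ac)
  then have "(pade (-1) k * ctil_fps - pade 1 k) $ n = 0"
    using assms by (simp only: fps_X_power_mult_nth) simp
  then show ?thesis by simp
qed

lemma pade_odd_nth_vanish:
  assumes "odd e" and "e \<le> 2 * k"
  shows "(pade (-1) k * (ctil_fps + 1)) $ e = 0"
  using pade_approximation[OF assms(2)] pade_reflect[of "-1" k e] assms(1)
  by (simp add: ring_distribs)

lemma pade_convolution:
  assumes "odd e" and "e \<le> 2 * k"
  shows "(\<Sum>t = 1..k. pade (-1) k $ t * ctilZ 4 (int e - int t)) = - (2 ^ k * ctil 4 e)"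
proof -
  have "(\<Sum>t = 1..k. pade (-1) k $ t * ctilZ 4 (int e - int t))
      = (\<Sum>t = 1..k + e. pade (-1) k $ t * ctilZ 4 (int e - int t))"
    by (rule sum.mono_neutral_left) (auto simp: pade_nth_above_degree)
  also have "\<dots> = (\<Sum>t = 1..e. pade (-1) k $ t * ctilZ 4 (int e - int t))"
    by (rule sum.mono_neutral_right) (auto simp: ctilZ_def)
  also have "\<dots> = (\<Sum>t = 1..e. pade (-1) k $ t * ctil 4 (e - t))"
    by (rule sum.cong) (auto simp: ctilZ_def nat_diff_distrib simp del: ctil.simps)
  also have "\<dots> = (pade (-1) k * (ctil_fps + 1)) $ e - 2 ^ k * ctil 4 e"
    unfolding fps_mult_nth ctil_fps_plus_1_nth
    by (subst sum.atLeast_Suc_atMost) (simp_all del: ctil.simps)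
  finally show ?thesis using pade_odd_nth_vanish[OF assms] by simp
qed

lemma det_single_entry_row:
  assumes A: "(A :: 'a :: comm_ring_1 mat) \<in> carrier_mat n n" and "i < n" and "j < n"
    and zero: "\<And>l. l < n \<Longrightarrow> l \<noteq> j \<Longrightarrow> A $$ (i, l) = 0"
  shows "det A = A $$ (i, j) * cofactor A i j"
proof -
  have "det A = (\<Sum>l<n. A $$ (i, l) * cofactor A i l)"
    by (rule laplace_expansion_row[OF A \<open>i < n\<close>])
  also have "\<dots> = A $$ (i, j) * cofactor A i j"
    using \<open>j < n\<close> zero by (subst sum.remove[of _ j]) (auto intro: sum.neutral)
  finally show ?thesis .
qed

(* ctil_mat k k is the matrix of P_k(1,4,0), and ctil_mat n (Suc n) is ctil_mat n n bordered
   by the last row (0, ..., 0, c_0). *)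
definition ctil_mat :: "nat \<Rightarrow> nat \<Rightarrow> rat mat" where
  "ctil_mat d k = mat k k (\<lambda>(i, m). ctilZ 4 (int d - 2 * int i + int m))"

definition pade_companion :: "nat \<Rightarrow> rat mat" where
  "pade_companion n = mat (Suc n) (Suc n) (\<lambda>(i, m).
     if m < n then (if i = Suc m then 1 else 0)
     else - pade (-1) (Suc n) $ (Suc n - i) / 2 ^ Suc n)"

(* Column m < n of the product is column m + 1 of ctil_mat n (Suc n); the last column comes
   from pade_convolution. *)
lemma ctil_mat_factor:
  "ctil_mat (Suc n) (Suc n) = ctil_mat n (Suc n) * pade_companion n"
proof (rule eq_matI)
  fix i m assume "i < dim_row (ctil_mat n (Suc n) * pade_companion n)"
    and "m < dim_col (ctil_mat n (Suc n) * pade_companion n)"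
  then have i: "i < Suc n" and m: "m < Suc n" by (auto simp: ctil_mat_def pade_companion_def)
  have prod: "(ctil_mat n (Suc n) * pade_companion n) $$ (i, m)
      = (\<Sum>j<Suc n. ctilZ 4 (int n - 2 * int i + int j) * pade_companion n $$ (j, m))"
    using i m by (simp add: ctil_mat_def pade_companion_def scalar_prod_def lessThan_atLeast0)
  show "ctil_mat (Suc n) (Suc n) $$ (i, m) = (ctil_mat n (Suc n) * pade_companion n) $$ (i, m)"
  proof (cases "m < n")
    case True
    have "(\<Sum>j<Suc n. ctilZ 4 (int n - 2 * int i + int j) * pade_companion n $$ (j, m))
        = (\<Sum>j<Suc n. if j = Suc m then ctilZ 4 (int n - 2 * int i + int j) else 0)"
      by (rule sum.cong) (use True m in \<open>auto simp: pade_companion_def\<close>)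
    also have "\<dots> = ctilZ 4 (int n - 2 * int i + int (Suc m))"
      using True by simp
    finally show ?thesis unfolding prod using i m by (simp add: ctil_mat_def algebra_simps)
  next
    case False
    then have mn: "m = n" using m by simp
    define e where "e = 2 * n + 1 - 2 * i"
    have e: "odd e" "e \<le> 2 * Suc n" "int e = 2 * int n + 1 - 2 * int i"
      using i unfolding e_def by auto
    have "(\<Sum>j<Suc n. ctilZ 4 (int n - 2 * int i + int j) * pade_companion n $$ (j, m))
        = - (\<Sum>j<Suc n. ctilZ 4 (int n - 2 * int i + int j) * pade (-1) (Suc n) $ (Suc n - j))
          / 2 ^ Suc n"
      unfolding sum_negf [symmetric] sum_divide_distrib
      by (rule sum.cong) (auto simp: pade_companion_def mn)
    also have "(\<Sum>j<Suc n. ctilZ 4 (int n - 2 * int i + int j) * pade (-1) (Suc n) $ (Suc n - j))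
        = (\<Sum>t = 1..Suc n. pade (-1) (Suc n) $ t * ctilZ 4 (int e - int t))"
    proof (rule sum.reindex_bij_witness[where i = "\<lambda>t. Suc n - t" and j = "\<lambda>j. Suc n - j"])
      fix j assume "j \<in> {..<Suc n}"
      then have "int e - int (Suc n - j) = int n - 2 * int i + int j"
        using e(3) by (auto simp: of_nat_diff)
      then show "pade (-1) (Suc n) $ (Suc n - j) * ctilZ 4 (int e - int (Suc n - j))
          = ctilZ 4 (int n - 2 * int i + int j) * pade (-1) (Suc n) $ (Suc n - j)"
        by (simp only: mult.commute)
    qed auto
    also have "\<dots> = - (2 ^ Suc n * ctil 4 e)"
      by (rule pade_convolution[OF e(1,2)])
    finally have product_entry: "(ctil_mat n (Suc n) * pade_companion n) $$ (i, m) = ctil 4 e"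
      unfolding prod by simp
    have "int e = int (Suc n) - 2 * int i + int m"
      using mn e(3) by simp
    then have "ctil_mat (Suc n) (Suc n) $$ (i, m) = ctilZ 4 (int e)"
      using i m by (simp add: ctil_mat_def)
    then show ?thesis unfolding product_entry by (simp add: ctilZ_def)
  qed
qed (simp_all add: ctil_mat_def pade_companion_def)

lemma det_ctil_mat_extend: "det (ctil_mat n (Suc n)) = 2 * det (ctil_mat n n)"
proof -
  have "det (ctil_mat n (Suc n)) = ctil_mat n (Suc n) $$ (n, n) * cofactor (ctil_mat n (Suc n)) n n"
    by (rule det_single_entry_row) (auto simp: ctil_mat_def ctilZ_def)
  moreover have "mat_delete (ctil_mat n (Suc n)) n n = ctil_mat n n"
    by (rule eq_matI) (auto simp: mat_delete_def ctil_mat_def)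
  ultimately show ?thesis by (simp add: cofactor_def ctil_mat_def ctilZ_def)
qed

lemma det_pade_companion:
  "det (pade_companion n) = (-1) ^ Suc n * pade (-1) (Suc n) $ Suc n / 2 ^ Suc n"
proof -
  have "det (pade_companion n) = pade_companion n $$ (0, n) * cofactor (pade_companion n) 0 n"
    by (rule det_single_entry_row) (auto simp: pade_companion_def)
  moreover have "mat_delete (pade_companion n) 0 n = 1\<^sub>m n"
    by (rule eq_matI) (auto simp: mat_delete_def pade_companion_def)
  ultimately show ?thesis by (simp add: cofactor_def pade_companion_def)
qed

lemma det_ctil_mat: "\<exists>s. det (ctil_mat k k) = (-1) ^ s / 2 ^ (k choose 2)"
proof (induction k)
  case 0
  show ?case by (intro exI[of _ 0]) (simp add: ctil_mat_def numeral_2_eq_2)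
next
  case (Suc n)
  then obtain s where s: "det (ctil_mat n n) = (-1) ^ s / 2 ^ (n choose 2)" ..
  have "det (ctil_mat (Suc n) (Suc n)) = det (ctil_mat n (Suc n)) * det (pade_companion n)"
    unfolding ctil_mat_factor by (rule det_mult) (auto simp: ctil_mat_def pade_companion_def)
  also have "\<dots> = 2 * ((-1) ^ s / 2 ^ (n choose 2))
      * ((-1) ^ Suc n * (-1) ^ ((Suc n + 1) div 2) / 2 ^ Suc n)"
    by (simp only: det_ctil_mat_extend det_pade_companion pade_nth_degree s)
  also have "\<dots> = (-1) ^ (s + Suc n + (Suc n + 1) div 2) / 2 ^ (n + (n choose 2))"
    by (simp add: power_add field_simps)
  also have "n + (n choose 2) = Suc n choose 2"
    by (simp add: numeral_2_eq_2)
  finally show ?case ..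
qed

lemma padic_unit_of_int_div:
  assumes "\<not> int p dvd a" and "\<not> int p dvd b"
  shows "padic_unit p (of_int a / of_int b)"
proof -
  obtain a' b' where q: "quotient_of (of_int a / of_int b) = (a', b')"
    by (cases "quotient_of (of_int a / of_int b)")
  have "b \<noteq> 0" using assms(2) by auto
  moreover have "b' \<noteq> 0" using quotient_of_denom_pos[OF q] by simp
  ultimately have "rat_of_int (a' * b) = rat_of_int (a * b')"
    using quotient_of_div[OF q] by (simp add: field_simps)
  then have cross: "a' * b = a * b'" by (simp only: of_int_eq_iff)
  have coprime: "coprime a' b'" using quotient_of_coprime[OF q] .
  have "a' dvd a * b'" unfolding cross [symmetric] by simp
  then have "a' dvd a" using coprime by (simp add: coprime_dvd_mult_left_iff)
  have "b' dvd b * a'" unfolding mult.commute [of b] cross by simp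
  moreover have "coprime b' a'" using coprime by (simp add: coprime_commute)
  ultimately have "b' dvd b" by (simp add: coprime_dvd_mult_left_iff)
  have "\<not> int p dvd a'" using \<open>a' dvd a\<close> assms(1) dvd_trans by blast
  moreover have "\<not> int p dvd b'" using \<open>b' dvd b\<close> assms(2) dvd_trans by blast
  ultimately show ?thesis unfolding padic_unit_def q by simp
qed

lemma padic_unit_signed_inverse_power_2:
  assumes "prime p" and "odd p"
  shows "padic_unit p ((-1) ^ s / 2 ^ e)"
proof (rule padic_unit_of_int_div[where a = "(-1) ^ s" and b = "2 ^ e", simplified])
  show "\<not> int p dvd (-1) ^ s"
    using prime_gt_1_nat[OF assms(1)] by (cases "even s") auto
  show "\<not> int p dvd 2 ^ e"
  proof
    assume "int p dvd 2 ^ e"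
    then have "p dvd 2 ^ e" by (metis of_nat_dvd_iff of_nat_numeral of_nat_power)
    then have "p dvd 2" using assms(1) prime_dvd_power by blast
    then have "p = 2" using prime_ge_2_nat[OF assms(1)] dvd_imp_le[of p 2] by simp
    then show False using assms(2) by simp
  qed
qed

theorem lemma4p5:
  fixes k p :: nat
  assumes "k > 0" and "prime p" and "odd p" and "p > k"
  shows "padic_unit p (Pk k 4)"
proof -
  obtain s where "Pk k 4 = (-1) ^ s / 2 ^ (k choose 2)"
    using det_ctil_mat[of k] unfolding Pk_def ctil_mat_def by blast
  then show ?thesis using padic_unit_signed_inverse_power_2[OF assms(2,3)] by simp
qed

end
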